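(* Fix $(x,t)$ and let $F_k=\mu_k+\sqrt{\mu_k}f_k$ ($k=1,2$) be functions of $v\in\mathbb{R}^3$ with $(1+|v|^2)F_k\in L^1(\mathbb{R}^3)$, $n_k>0$. For $\theta\in[0,1]$ define $n_{k\theta}=\theta n_k+(1-\theta)n_{k0}$, $U_{k\theta}$ by $n_{k\theta}U_{k\theta}=\theta n_kU_k$, and $T_{k\theta}$ by $G_{k\theta}=\theta G_k$, where $G_k=\frac{3n_kT_k+m_kn_k|U_k|^2-3n_k}{\sqrt6}$ and $G_{k\theta}=\frac{3n_{k\theta}T_{k\theta}+m_kn_{k\theta}|U_{k\theta}|^2-3n_{k\theta}}{\sqrt6}$. Let $U_{12\theta},U_{21\theta},T_{12\theta},T_{21\theta}$ be defined from $(U_{k\theta},T_{k\theta})$ by the same formulas that define $U_{12},U_{21},T_{12},T_{21}$ from $(U_k,T_k)$, and let $\mathcal{M}_{12}(\theta)=\frac{n_{1\theta}}{(2\pi T_{12\theta}/m_1)^{3/2}}\exp(-\frac{|v-U_{12\theta}|^2}{2T_{12\theta}/m_1})$, $\mathcal{M}_{21}(\theta)=\frac{n_{2\theta}}{(2\pi T_{21\theta}/m_2)^{3/2}}\exp(-\frac{|v-U_{21\theta}|^2}{2T_{21\theta}/m_2})$, and assume $T_{12\theta},T_{21\theta}>0$ for $\theta\in[0,1]$. Set $\Gamma_{12}^{M}=\frac{1}{\sqrt{\mu_1}}\int_0^1\mathcal{M}_{12}''(\theta)(1-\theta)d\theta$ and $\Gamma_{21}^M=\frac{1}{\sqrt{\mu_2}}\int_0^1\mathcal{M}_{21}''(\theta)(1-\theta)d\theta$.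 Then \begin{align*} \mathcal{M}_{12}&=\mu_1+P_1f_1\sqrt{\mu_1}+(1-\delta)\sum_{i=2}^4\Big(\sqrt{\tfrac{n_{10}}{n_{20}}}\sqrt{\tfrac{m_1}{m_2}}\langle f_2,e_{2i}\rangle_{L^2_v}-\langle f_1,e_{1i}\rangle_{L^2_v}\Big)e_{1i}\sqrt{\mu_1}\\ &\quad+(1-\omega)\Big(\sqrt{\tfrac{n_{10}}{n_{20}}}\langle f_2,e_{25}\rangle_{L^2_v}-\langle f_1,e_{15}\rangle_{L^2_v}\Big)e_{15}\sqrt{\mu_1}+\sqrt{\mu_1}\,\Gamma_{12}^M, \end{align*} \begin{align*} \mathcal{M}_{21}&=\mu_2+P_2f_2\sqrt{\mu_2}+\tfrac{m_1}{m_2}(1-\delta)\sum_{i=2}^4\Big(\sqrt{\tfrac{n_{20}}{n_{10}}}\sqrt{\tfrac{m_2}{m_1}}\langle f_1,e_{1i}\rangle_{L^2_v}-\langle f_2,e_{2i}\rangle_{L^2_v}\Big)e_{2i}\sqrt{\mu_2}\\ &\quad+(1-\omega)\Big(\sqrt{\tfrac{n_{20}}{n_{10}}}\langle f_1,e_{15}\rangle_{L^2_v}-\langle f_2,e_{25}\rangle_{L^2_v}\Big)e_{25}\sqrt{\mu_2}+\sqrt{\mu_2}\,\Gamma_{21}^M. \end{align*}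
   Context: $m_1\ge m_2>0$, $n_{10},n_{20}>0$; $0\le\delta<1$, $0\le\omega<1$, $\gamma\ge0$ are parameters. For $F_k(v)$: $n_k=\int F_kdv$, $U_k=\frac1{n_k}\int F_kv\,dv$, $T_k=\frac{1}{3n_k}\int F_km_k|v-U_k|^2dv$; $U_{12}=\delta U_1+(1-\delta)U_2$, $U_{21}=\frac{m_1}{m_2}(1-\delta)U_1+(1-\frac{m_1}{m_2}(1-\delta))U_2$, $T_{12}=\omega T_1+(1-\omega)T_2+\gamma|U_2-U_1|^2$, $T_{21}=(1-\omega)T_1+\omega T_2+\big(\frac13m_1(1-\delta)(\frac{m_1}{m_2}(\delta-1)+1+\delta)-\gamma\big)|U_2-U_1|^2$; $\mathcal{M}_{12},\mathcal{M}_{21}$ are $\mathcal{M}_{12}(1),\mathcal{M}_{21}(1)$. $\mu_k(v)=n_{k0}(\frac{m_k}{2\pi})^{3/2}e^{-m_k|v|^2/2}$. Orthonormal functions in $L^2(\mathbb{R}^3_v)$: $e_{k1}=\frac{\sqrt{\mu_k}}{\sqrt{n_{k0}}}$, $e_{ki}=\sqrt{\frac{m_k}{n_{k0}}}v_{i-1}\sqrt{\mu_k}$ ($i=2,3,4$), $e_{k5}=\frac{m_k|v|^2-3}{\sqrt{6n_{k0}}}\sqrt{\mu_k}$; $P_kf=\sum_{i=1}^5\langle f,e_{ki}\rangle_{L^2_v}e_{ki}$, where $\langle f,g\rangle_{L^2_v}=\int_{\mathbb{R}^3}fg\,dv$. *)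

theory Defs
  imports "HOL-Analysis.Analysis"
begin

definition mu :: "real \<Rightarrow> real \<Rightarrow> real^3 \<Rightarrow> real" where
  "mu m n0 v = n0 * (m / (2*pi)) powr (3/2) * exp (- m * (norm v)^2 / 2)"

definition vcomp :: "nat \<Rightarrow> real^3 \<Rightarrow> real" where
  "vcomp j v = (if j = 1 then v$1 else if j = 2 then v$2 else v$3)"

definition ebasis :: "real \<Rightarrow> real \<Rightarrow> nat \<Rightarrow> real^3 \<Rightarrow> real" where
  "ebasis m n0 i v =
     (if i = 1 then sqrt (mu m n0 v) / sqrt n0
      else if i \<in> {2,3,4} then sqrt (m / n0) * vcomp (i - 1) v * sqrt (mu m n0 v)
      else if i = 5 then (m * (norm v)^2 - 3) / sqrt (6 * n0) * sqrt (mu m n0 v)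
      else 0)"

definition L2ip :: "(real^3 \<Rightarrow> real) \<Rightarrow> (real^3 \<Rightarrow> real) \<Rightarrow> real" where
  "L2ip f g = (\<integral>v. f v * g v \<partial>lborel)"

definition Pproj :: "real \<Rightarrow> real \<Rightarrow> (real^3 \<Rightarrow> real) \<Rightarrow> real^3 \<Rightarrow> real" where
  "Pproj m n0 f v = (\<Sum>i=1..5. L2ip f (ebasis m n0 i) * ebasis m n0 i v)"

definition dens :: "(real^3 \<Rightarrow> real) \<Rightarrow> real" where
  "dens F = (\<integral>v. F v \<partial>lborel)"

definition vel :: "(real^3 \<Rightarrow> real) \<Rightarrow> real^3" where
  "vel F = (1 / dens F) *\<^sub>R (\<integral>v. F v *\<^sub>R v \<partial>lborel)"

definition temp :: "real \<Rightarrow> (real^3 \<Rightarrow> real) \<Rightarrow> real" where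
  "temp m F = 1 / (3 * dens F) * (\<integral>v. F v * m * (norm (v - vel F))^2 \<partial>lborel)"

definition maxw :: "real \<Rightarrow> real \<Rightarrow> real^3 \<Rightarrow> real \<Rightarrow> real^3 \<Rightarrow> real" where
  "maxw m n U T v = n / (2 * pi * T / m) powr (3/2) * exp (- ((norm (v - U))\<^sup>2) / (2 * T / m))"

definition U12 :: "real \<Rightarrow> real^3 \<Rightarrow> real^3 \<Rightarrow> real^3" where
  "U12 \<delta> U1 U2 = \<delta> *\<^sub>R U1 + (1 - \<delta>) *\<^sub>R U2"

definition U21 :: "real \<Rightarrow> real \<Rightarrow> real \<Rightarrow> real^3 \<Rightarrow> real^3 \<Rightarrow> real^3" where
  "U21 m1 m2 \<delta> U1 U2 = (m1 / m2 * (1 - \<delta>)) *\<^sub>R U1 + (1 - m1 / m2 * (1 - \<delta>)) *\<^sub>R U2"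

definition T12 :: "real \<Rightarrow> real \<Rightarrow> real \<Rightarrow> real \<Rightarrow> real^3 \<Rightarrow> real^3 \<Rightarrow> real" where
  "T12 \<omega> \<gamma> T1 T2 U1 U2 = \<omega> * T1 + (1 - \<omega>) * T2 + \<gamma> * (norm (U2 - U1))^2"

definition T21 :: "real \<Rightarrow> real \<Rightarrow> real \<Rightarrow> real \<Rightarrow> real \<Rightarrow> real \<Rightarrow> real \<Rightarrow> real^3 \<Rightarrow> real^3 \<Rightarrow> real" where
  "T21 m1 m2 \<delta> \<omega> \<gamma> T1 T2 U1 U2 = (1 - \<omega>) * T1 + \<omega> * T2
     + (1/3 * m1 * (1 - \<delta>) * (m1 / m2 * (\<delta> - 1) + 1 + \<delta>) - \<gamma>) * (norm (U2 - U1))^2"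

text \<open>theta-interpolated quantities: n_{k theta}, U_{k theta} from n_{k theta} U_{k theta} = theta n_k U_k,
  and T_{k theta} from G_{k theta} = theta G_k (solved explicitly for T_{k theta}).\<close>
definition nth :: "real \<Rightarrow> real \<Rightarrow> real \<Rightarrow> real" where
  "nth \<theta> n n0 = \<theta> * n + (1 - \<theta>) * n0"

definition Uth :: "real \<Rightarrow> real \<Rightarrow> real \<Rightarrow> real^3 \<Rightarrow> real^3" where
  "Uth \<theta> n n0 U = (\<theta> * n / nth \<theta> n n0) *\<^sub>R U"

definition Gk :: "real \<Rightarrow> real \<Rightarrow> real^3 \<Rightarrow> real \<Rightarrow> real" where
  "Gk m n U T = (3 * n * T + m * n * (norm U)^2 - 3 * n) / sqrt 6"

definition Tth :: "real \<Rightarrow> real \<Rightarrow> real \<Rightarrow> real \<Rightarrow> real^3 \<Rightarrow> real \<Rightarrow> real" where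
  "Tth m \<theta> n n0 U T =
     (sqrt 6 * \<theta> * Gk m n U T + 3 * nth \<theta> n n0 - m * nth \<theta> n n0 * (norm (Uth \<theta> n n0 U))^2)
       / (3 * nth \<theta> n n0)"

definition T12th where
  "T12th m1 m2 \<omega> \<gamma> n1 n10 U1 T1 n2 n20 U2 T2 \<theta> =
     T12 \<omega> \<gamma> (Tth m1 \<theta> n1 n10 U1 T1) (Tth m2 \<theta> n2 n20 U2 T2) (Uth \<theta> n1 n10 U1) (Uth \<theta> n2 n20 U2)"

definition T21th where
  "T21th m1 m2 \<delta> \<omega> \<gamma> n1 n10 U1 T1 n2 n20 U2 T2 \<theta> =
     T21 m1 m2 \<delta> \<omega> \<gamma> (Tth m1 \<theta> n1 n10 U1 T1) (Tth m2 \<theta> n2 n20 U2 T2) (Uth \<theta> n1 n10 U1) (Uth \<theta> n2 n20 U2)"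

definition M12th where
  "M12th m1 m2 \<delta> \<omega> \<gamma> n1 n10 U1 T1 n2 n20 U2 T2 \<theta> v =
     maxw m1 (nth \<theta> n1 n10) (U12 \<delta> (Uth \<theta> n1 n10 U1) (Uth \<theta> n2 n20 U2))
       (T12th m1 m2 \<omega> \<gamma> n1 n10 U1 T1 n2 n20 U2 T2 \<theta>) v"

definition M21th where
  "M21th m1 m2 \<delta> \<omega> \<gamma> n1 n10 U1 T1 n2 n20 U2 T2 \<theta> v =
     maxw m2 (nth \<theta> n2 n20) (U21 m1 m2 \<delta> (Uth \<theta> n1 n10 U1) (Uth \<theta> n2 n20 U2))
       (T21th m1 m2 \<delta> \<omega> \<gamma> n1 n10 U1 T1 n2 n20 U2 T2 \<theta>) v"

end

theory Submission
  imports Defs "HOL-Probability.Probability"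
begin

text \<open>
  The mixture Maxwellian \<open>\<M>\<^sub>1\<^sub>2\<close> is the value at \<open>\<theta> = 1\<close> of the path \<open>\<M>\<^sub>1\<^sub>2(\<theta>)\<close>
  that interpolates density, momentum and energy moment \<open>G\<^sub>k\<close> of both species linearly between
  the global equilibrium, where \<open>\<M>\<^sub>1\<^sub>2(0) = \<mu>\<^sub>1\<close>, and the local state. Taylor's formula with
  integral remainder gives \<open>\<M>\<^sub>1\<^sub>2(1) = \<mu>\<^sub>1 + \<M>\<^sub>1\<^sub>2'(0) + remainder\<close>, and \<open>\<M>\<^sub>1\<^sub>2'(0)\<close> is
  \<open>\<mu>\<^sub>1\<close> times a quadratic polynomial in \<open>v\<close> whose coefficients are the increments
  \<open>n\<^sub>k - n\<^sub>k\<^sub>0\<close>, \<open>n\<^sub>k U\<^sub>k\<close> and \<open>G\<^sub>k\<close>. Since \<open>F\<^sub>k - \<mu>\<^sub>k = \<surd>\<mu>\<^sub>k f\<^sub>k\<close> and the Gaussian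
  moments of \<open>\<mu>\<^sub>k\<close> are those of the global equilibrium, these increments are multiples of the
  coefficients \<open>\<langle>f\<^sub>k, e\<^sub>k\<^sub>i\<rangle>\<close>, and regrouping \<open>\<M>\<^sub>1\<^sub>2'(0)\<close> in these coefficients yields \<open>P\<^sub>1f\<^sub>1\<close> plus the
  exchange terms. \<open>\<M>\<^sub>2\<^sub>1\<close> is the same computation with the roles of the species exchanged.
\<close>

section \<open>Gaussian moments of the global Maxwellian\<close>

lemma
  fixes f :: "'a::euclidean_space \<Rightarrow> real \<Rightarrow> real"
  assumes int: "\<And>b. b \<in> Basis \<Longrightarrow> integrable lborel (f b)"
  shows integrable_lborel_prod_Basis: "integrable lborel (\<lambda>x::'a. \<Prod>b\<in>Basis. f b (x \<bullet> b))"
    and integral_lborel_prod_Basis: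
      "(\<integral>x. (\<Prod>b\<in>Basis. f b (x \<bullet> b)) \<partial>lborel) = (\<Prod>b\<in>Basis. \<integral>x. f b x \<partial>lborel)"
proof -
  interpret product_sigma_finite "\<lambda>_::'a. lborel::real measure" by standard
  have [measurable]: "\<And>b. b \<in> Basis \<Longrightarrow> f b \<in> borel_measurable borel"
    using int by auto
  have meas: "(\<lambda>x::'a. \<Prod>b\<in>Basis. f b (x \<bullet> b)) \<in> borel_measurable borel"
    by measurable
  have coords: "(\<lambda>g::'a\<Rightarrow>real. \<Sum>c\<in>Basis. g c *\<^sub>R c) \<in> measurable (\<Pi>\<^sub>M b\<in>Basis. lborel) borel"
    by measurable
  have eq: "(\<Prod>b\<in>Basis. f b ((\<Sum>c\<in>Basis. g c *\<^sub>R c) \<bullet> b)) = (\<Prod>b\<in>Basis. f b (g b))" for g :: "'a \<Rightarrow> real"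
    by (intro prod.cong refl) (simp add: inner_sum_left inner_Basis if_distrib[of "\<lambda>x. _ * x"] sum.delta cong: if_cong)
  show "integrable lborel (\<lambda>x::'a. \<Prod>b\<in>Basis. f b (x \<bullet> b))"
    by (subst lborel_eq, subst integrable_distr_eq[OF coords meas], unfold eq)
       (rule product_integrable_prod, auto intro: int)
  show "(\<integral>x. (\<Prod>b\<in>Basis. f b (x \<bullet> b)) \<partial>lborel) = (\<Prod>b\<in>Basis. \<integral>x. f b x \<partial>lborel)"
    by (subst lborel_eq, subst integral_distr[OF coords meas], unfold eq)
       (rule product_integral_prod, auto intro: int)
qed

lemma power2_norm_eq_sum_Basis: "(norm x)\<^sup>2 = (\<Sum>b\<in>Basis. (x \<bullet> b)\<^sup>2)"
  unfolding power2_norm_eq_inner euclidean_inner[of x x] by (simp add: power2_eq_square)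

lemma mu_eq_prod_normal_density:
  assumes "m > 0"
  shows "mu m n0 v = n0 * (\<Prod>b\<in>Basis. normal_density 0 (1 / sqrt m) (v \<bullet> b))"
proof -
  have nd: "normal_density 0 (1 / sqrt m) x = sqrt (m / (2 * pi)) * exp (- m * x\<^sup>2 / 2)" for x
    using assms by (simp add: normal_density_def power_divide real_sqrt_divide field_simps)
  have "sqrt (m / (2 * pi)) ^ 3 = (m / (2 * pi)) powr (3 / 2)"
    using assms by (simp add: powr_half_sqrt[symmetric] powr_realpow[symmetric] powr_powr)
  moreover have "(\<Prod>b\<in>(Basis::(real^3) set). exp (- m * (v \<bullet> b)\<^sup>2 / 2)) = exp (- m * (norm v)\<^sup>2 / 2)"
  proof -
    have "(\<Sum>b\<in>(Basis::(real^3) set). - m * (v \<bullet> b)\<^sup>2 / 2) = - m * (norm v)\<^sup>2 / 2"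
      by (simp add: power2_norm_eq_sum_Basis[of v] sum_distrib_left sum_divide_distrib)
    then show ?thesis by (simp add: exp_sum[symmetric])
  qed
  ultimately show ?thesis
    by (simp add: mu_def nd prod.distrib)
qed

lemma mu_coordinate_moment:
  fixes g :: "real \<Rightarrow> real" and c :: "real^3"
  assumes m: "m > 0" and c: "c \<in> Basis"
    and g: "integrable lborel (\<lambda>x. normal_density 0 (1 / sqrt m) x * g x)"
  shows "integrable lborel (\<lambda>v. mu m n0 v * g (v \<bullet> c))"
    and "(\<integral>v. mu m n0 v * g (v \<bullet> c) \<partial>lborel)
           = n0 * (\<integral>x. normal_density 0 (1 / sqrt m) x * g x \<partial>lborel)"
proof -
  let ?\<phi> = "normal_density 0 (1 / sqrt m)"
  define h where "h b = (if b = c then (\<lambda>x. ?\<phi> x * g x) else ?\<phi>)" for b :: "real^3"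
  have \<sigma>: "1 / sqrt m > 0" using m by simp
  have h_int: "integrable lborel (h b)" for b
    using g integrable_normal_density[OF \<sigma>] by (simp add: h_def)
  have "(\<Prod>b\<in>Basis. h b (v \<bullet> b)) = (\<Prod>b\<in>Basis. ?\<phi> (v \<bullet> b) * (if b = c then g (v \<bullet> b) else 1))"
    for v :: "real^3"
    by (intro prod.cong) (auto simp: h_def)
  then have eq: "mu m n0 v * g (v \<bullet> c) = n0 * (\<Prod>b\<in>Basis. h b (v \<bullet> b))" for v
    using c by (simp add: mu_eq_prod_normal_density[OF m] prod.distrib prod.delta)
  have "(\<Prod>b\<in>Basis. \<integral>x. h b x \<partial>lborel) = (\<Prod>b\<in>(Basis::(real^3) set).
           if b = c then \<integral>x. ?\<phi> x * g x \<partial>lborel else 1)"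
    by (intro prod.cong) (auto simp: h_def integral_normal_density[OF \<sigma>])
  also have "\<dots> = (\<integral>x. ?\<phi> x * g x \<partial>lborel)"
    using c by (simp add: prod.delta)
  finally have "(\<Prod>b\<in>Basis. \<integral>x. h b x \<partial>lborel) = (\<integral>x. ?\<phi> x * g x \<partial>lborel)" .
  then show "integrable lborel (\<lambda>v. mu m n0 v * g (v \<bullet> c))"
    and "(\<integral>v. mu m n0 v * g (v \<bullet> c) \<partial>lborel) = n0 * (\<integral>x. ?\<phi> x * g x \<partial>lborel)"
    unfolding eq using integrable_lborel_prod_Basis[of h, OF h_int] integral_lborel_prod_Basis[of h, OF h_int]
    by auto
qed

lemma
  assumes m: "m > 0"
  shows integrable_mu: "integrable lborel (mu m n0)"
    and integral_mu: "(\<integral>v. mu m n0 v \<partial>lborel) = n0"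
proof -
  have \<sigma>: "1 / sqrt m > 0" using m by simp
  have "mu m n0 = (\<lambda>v. n0 * (\<Prod>b\<in>Basis. normal_density 0 (1 / sqrt m) (v \<bullet> b)))"
    using mu_eq_prod_normal_density[OF m] by (simp add: fun_eq_iff)
  then show "integrable lborel (mu m n0)" and "(\<integral>v. mu m n0 v \<partial>lborel) = n0"
    using integrable_lborel_prod_Basis[of "\<lambda>_::real^3. normal_density 0 (1 / sqrt m)"]
      integral_lborel_prod_Basis[of "\<lambda>_::real^3. normal_density 0 (1 / sqrt m)"]
    by (simp_all add: integrable_normal_density[OF \<sigma>] integral_normal_density[OF \<sigma>])
qed

lemma
  assumes "m > 0" and "c \<in> Basis"
  shows integrable_mu_coordinate: "integrable lborel (\<lambda>v. mu m n0 v * (v \<bullet> c))"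
    and integral_mu_coordinate: "(\<integral>v. mu m n0 v * (v \<bullet> c) \<partial>lborel) = 0"
  using mu_coordinate_moment[OF assms, of "\<lambda>x. x" n0] assms
  by (simp_all add: integrable_normal_moment_nz_1 integral_normal_moment_nz_1)

lemma
  assumes m: "m > 0"
  shows integrable_mu_norm_sq: "integrable lborel (\<lambda>v. mu m n0 v * (norm v)\<^sup>2)"
    and integral_mu_norm_sq: "(\<integral>v. mu m n0 v * (norm v)\<^sup>2 \<partial>lborel) = 3 * n0 / m"
proof -
  have \<sigma>: "1 / sqrt m > 0" using m by simp
  have int: "integrable lborel (\<lambda>x. normal_density 0 (1 / sqrt m) x * x\<^sup>2)"
    using integrable_normal_moment[OF \<sigma>, of 0 2] by simp
  have "(\<integral>x. normal_density 0 (1 / sqrt m) x * x\<^sup>2 \<partial>lborel) = 1 / m"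
    using integral_normal_moment_even[OF \<sigma>, of 0 1] m by (simp add: power_divide)
  then have coord: "integrable lborel (\<lambda>v. mu m n0 v * (v \<bullet> c)\<^sup>2)"
      "(\<integral>v. mu m n0 v * (v \<bullet> c)\<^sup>2 \<partial>lborel) = n0 / m" if "c \<in> Basis" for c :: "real^3"
    using mu_coordinate_moment[OF m that int] by simp_all
  have eq: "(\<lambda>v. mu m n0 v * (norm v)\<^sup>2) = (\<lambda>v. \<Sum>c\<in>Basis. mu m n0 v * (v \<bullet> c)\<^sup>2)"
    by (simp add: power2_norm_eq_sum_Basis sum_distrib_left)
  show "integrable lborel (\<lambda>v. mu m n0 v * (norm v)\<^sup>2)"
    unfolding eq using coord(1) by (rule Bochner_Integration.integrable_sum)
  show "(\<integral>v. mu m n0 v * (norm v)\<^sup>2 \<partial>lborel) = 3 * n0 / m"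
    unfolding eq using coord by (subst Bochner_Integration.integral_sum) simp_all
qed

lemma mu_pos: "m > 0 \<Longrightarrow> n0 > 0 \<Longrightarrow> mu m n0 v > 0"
  by (simp add: mu_def)

section \<open>Twice differentiable real functions\<close>

text \<open>Only pointwise existence of the second derivative is required: the Henstock-Kurzweil
  fundamental theorem of calculus behind \<open>Taylor_integral\<close> needs no continuity.\<close>

definition twice_differentiable_on :: "(real \<Rightarrow> real) \<Rightarrow> real set \<Rightarrow> bool" where
  "twice_differentiable_on f S \<longleftrightarrow> (\<exists>f' f''. \<forall>x\<in>S.
     (f has_real_derivative f' x) (at x) \<and> (f' has_real_derivative f'' x) (at x))"

lemma twice_differentiable_onI:
  assumes "\<And>x. x \<in> S \<Longrightarrow> (f has_real_derivative f' x) (at x)"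
    and "\<And>x. x \<in> S \<Longrightarrow> (f' has_real_derivative f'' x) (at x)"
  shows "twice_differentiable_on f S"
  using assms unfolding twice_differentiable_on_def by blast

lemma twice_differentiable_on_subset:
  "twice_differentiable_on f S \<Longrightarrow> T \<subseteq> S \<Longrightarrow> twice_differentiable_on f T"
  unfolding twice_differentiable_on_def by blast

lemma twice_differentiable_on_const: "twice_differentiable_on (\<lambda>x. c) S"
  by (rule twice_differentiable_onI[where f' = "\<lambda>_. 0" and f'' = "\<lambda>_. 0"]) simp_all

lemma twice_differentiable_on_ident: "twice_differentiable_on (\<lambda>x. x) S"
  by (rule twice_differentiable_onI[where f' = "\<lambda>_. 1" and f'' = "\<lambda>_. 0"]) simp_all

lemma twice_differentiable_on_add:
  assumes "twice_differentiable_on f S" and "twice_differentiable_on g S"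
  shows "twice_differentiable_on (\<lambda>x. f x + g x) S"
proof -
  obtain f' f'' g' g'' where f: "\<And>x. x \<in> S \<Longrightarrow> (f has_real_derivative f' x) (at x)"
      "\<And>x. x \<in> S \<Longrightarrow> (f' has_real_derivative f'' x) (at x)"
    and g: "\<And>x. x \<in> S \<Longrightarrow> (g has_real_derivative g' x) (at x)"
      "\<And>x. x \<in> S \<Longrightarrow> (g' has_real_derivative g'' x) (at x)"
    using assms unfolding twice_differentiable_on_def by metis
  show ?thesis
    by (rule twice_differentiable_onI[where f' = "\<lambda>x. f' x + g' x" and f'' = "\<lambda>x. f'' x + g'' x"])
       (auto intro!: derivative_eq_intros f g)
qed

lemma twice_differentiable_on_mult:
  assumes "twice_differentiable_on f S" and "twice_differentiable_on g S"
  shows "twice_differentiable_on (\<lambda>x. f x * g x) S"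
proof -
  obtain f' f'' g' g'' where f: "\<And>x. x \<in> S \<Longrightarrow> (f has_real_derivative f' x) (at x)"
      "\<And>x. x \<in> S \<Longrightarrow> (f' has_real_derivative f'' x) (at x)"
    and g: "\<And>x. x \<in> S \<Longrightarrow> (g has_real_derivative g' x) (at x)"
      "\<And>x. x \<in> S \<Longrightarrow> (g' has_real_derivative g'' x) (at x)"
    using assms unfolding twice_differentiable_on_def by metis
  show ?thesis
    by (rule twice_differentiable_onI[where f' = "\<lambda>x. f' x * g x + f x * g' x"
          and f'' = "\<lambda>x. f'' x * g x + f' x * g' x + (f' x * g' x + f x * g'' x)"])
       (auto intro!: derivative_eq_intros f g)
qed

lemma twice_differentiable_on_compose:
  assumes h: "twice_differentiable_on h T" and f: "twice_differentiable_on f S"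
    and "\<And>x. x \<in> S \<Longrightarrow> f x \<in> T"
  shows "twice_differentiable_on (\<lambda>x. h (f x)) S"
proof -
  obtain h' h'' where h: "\<And>y. y \<in> T \<Longrightarrow> (h has_real_derivative h' y) (at y)"
      "\<And>y. y \<in> T \<Longrightarrow> (h' has_real_derivative h'' y) (at y)"
    using assms(1) unfolding twice_differentiable_on_def by metis
  obtain f' f'' where f: "\<And>x. x \<in> S \<Longrightarrow> (f has_real_derivative f' x) (at x)"
      "\<And>x. x \<in> S \<Longrightarrow> (f' has_real_derivative f'' x) (at x)"
    using assms(2) unfolding twice_differentiable_on_def by metis
  show ?thesis
  proof (rule twice_differentiable_onI[where f' = "\<lambda>x. h' (f x) * f' x"
        and f'' = "\<lambda>x. h'' (f x) * f' x * f' x + h' (f x) * f'' x"])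
    fix x assume x: "x \<in> S"
    show "((\<lambda>x. h (f x)) has_real_derivative h' (f x) * f' x) (at x)"
      using DERIV_chain2[OF h(1) f(1)] x assms(3) by blast
    show "((\<lambda>x. h' (f x) * f' x) has_real_derivative h'' (f x) * f' x * f' x + h' (f x) * f'' x) (at x)"
      using DERIV_mult[OF DERIV_chain2[OF h(2) f(1)] f(2)] x assms(3) by (simp add: algebra_simps)
  qed
qed

lemma twice_differentiable_on_exp: "twice_differentiable_on exp S"
  by (rule twice_differentiable_onI[where f' = exp and f'' = exp]) (simp_all add: DERIV_exp)

lemma twice_differentiable_on_inverse: "twice_differentiable_on inverse {x. x \<noteq> 0}"
  by (rule twice_differentiable_onI[where f' = "\<lambda>x. - inverse (x\<^sup>2)" and f'' = "\<lambda>x. 2 * inverse (x ^ 3)"])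
     (auto intro!: derivative_eq_intros simp: field_simps power2_eq_square power3_eq_cube)

lemma twice_differentiable_on_powr: "twice_differentiable_on (\<lambda>x. x powr a) {0<..}"
  by (rule twice_differentiable_onI[where f' = "\<lambda>x. a * x powr (a - 1)"
        and f'' = "\<lambda>x. a * ((a - 1) * x powr (a - 1 - 1))"])
     (auto intro!: derivative_eq_intros)

lemma twice_differentiable_on_minus:
  assumes "twice_differentiable_on f S"
  shows "twice_differentiable_on (\<lambda>x. - f x) S"
  using twice_differentiable_on_mult[OF twice_differentiable_on_const[of "-1"] assms] by simp

lemma twice_differentiable_on_diff:
  "twice_differentiable_on f S \<Longrightarrow> twice_differentiable_on g S \<Longrightarrow> twice_differentiable_on (\<lambda>x. f x - g x) S"
  using twice_differentiable_on_add[OF _ twice_differentiable_on_minus, of f S g] by simp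

lemma twice_differentiable_on_divide:
  assumes "twice_differentiable_on f S" and "twice_differentiable_on g S" and "\<And>x. x \<in> S \<Longrightarrow> g x \<noteq> 0"
  shows "twice_differentiable_on (\<lambda>x. f x / g x) S"
  using twice_differentiable_on_mult[OF assms(1) twice_differentiable_on_compose[OF twice_differentiable_on_inverse assms(2)]]
    assms(3) by (simp add: divide_inverse)

lemma twice_differentiable_on_power:
  "twice_differentiable_on f S \<Longrightarrow> twice_differentiable_on (\<lambda>x. f x ^ n) S"
  by (induction n) (simp_all add: twice_differentiable_on_const twice_differentiable_on_mult)

lemma twice_differentiable_on_imp_continuous_on:
  assumes "twice_differentiable_on f S"
  shows "continuous_on S f"
proof -
  obtain f' f'' where "\<And>x. x \<in> S \<Longrightarrow> (f has_real_derivative f' x) (at x)"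
    using assms unfolding twice_differentiable_on_def by metis
  then show ?thesis
    by (intro continuous_at_imp_continuous_on ballI) (blast intro: DERIV_isCont)
qed

lemma taylor_integral_remainder_two:
  assumes S: "open S" "{0..1} \<subseteq> S" and f: "twice_differentiable_on f S"
  shows "f 1 = f 0 + deriv f 0 + integral {0..1} (\<lambda>t. deriv (deriv f) t * (1 - t))"
proof -
  obtain f' f'' where f': "\<And>x. x \<in> S \<Longrightarrow> (f has_real_derivative f' x) (at x)"
    and f'': "\<And>x. x \<in> S \<Longrightarrow> (f' has_real_derivative f'' x) (at x)"
    using f unfolding twice_differentiable_on_def by metis
  have deriv_f: "deriv f x = f' x" if "x \<in> S" for x
    using f'[OF that] by (rule DERIV_imp_deriv)
  have deriv_deriv_f: "(deriv f has_real_derivative f'' x) (at x)" if "x \<in> S" for x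
    using f''[OF that] S(1) that by (rule has_field_derivative_transform_within_open) (simp add: deriv_f)
  have "((deriv ^^ m) f has_vector_derivative (deriv ^^ Suc m) f t) (at t within {0..1})"
    if "m < 2" and "t \<in> {0..1}" for m t
  proof -
    have "t \<in> S" using that S(2) by blast
    then have "((deriv ^^ m) f has_real_derivative (deriv ^^ Suc m) f t) (at t)"
      using \<open>m < 2\<close> f'[of t] deriv_f[of t] deriv_deriv_f[of t] DERIV_imp_deriv[OF deriv_deriv_f]
      by (auto simp: less_2_cases_iff)
    then show ?thesis
      by (simp add: has_real_derivative_iff_has_vector_derivative has_vector_derivative_at_within)
  qed
  then have "f 1 = (\<Sum>i<2. ((1 - 0) ^ i / fact i) *\<^sub>R (deriv ^^ i) f 0)
      + integral {0..1} (\<lambda>t. ((1 - t) ^ (2 - 1) / fact (2 - 1)) *\<^sub>R (deriv ^^ 2) f t)"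
    by (intro Taylor_integral[where Df = "\<lambda>m. (deriv ^^ m) f"]) auto
  then show ?thesis
    by (simp add: numeral_2_eq_2 mult.commute)
qed

lemma norm_sq_affine_combination:
  fixes w X Y :: "'a::real_inner"
  shows "(norm (w + a *\<^sub>R X + b *\<^sub>R Y))\<^sup>2 = (norm w)\<^sup>2 + 2 * a * (w \<bullet> X) + 2 * b * (w \<bullet> Y)
     + a\<^sup>2 * (norm X)\<^sup>2 + 2 * a * b * (X \<bullet> Y) + b\<^sup>2 * (norm Y)\<^sup>2"
  unfolding power2_norm_eq_inner
  by (simp add: inner_add inner_commute algebra_simps power2_eq_square)

lemma twice_differentiable_on_norm_sq_path:
  fixes w X Y :: "'a::real_inner"
  assumes "twice_differentiable_on a S" and "twice_differentiable_on b S"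
  shows "twice_differentiable_on (\<lambda>\<theta>. (norm (w + a \<theta> *\<^sub>R X + b \<theta> *\<^sub>R Y))\<^sup>2) S"
  unfolding norm_sq_affine_combination
  by (intro twice_differentiable_on_add twice_differentiable_on_mult twice_differentiable_on_power
      twice_differentiable_on_const assms)

lemma norm_sq_path_has_real_derivative_at_0:
  fixes w X Y :: "'a::real_inner"
  assumes "(a has_real_derivative a') (at 0)" and "(b has_real_derivative b') (at 0)"
    and "a 0 = 0" and "b 0 = 0"
  shows "((\<lambda>\<theta>. (norm (w + a \<theta> *\<^sub>R X + b \<theta> *\<^sub>R Y))\<^sup>2) has_real_derivative
           2 * (a' * (w \<bullet> X) + b' * (w \<bullet> Y))) (at 0)"
  unfolding norm_sq_affine_combination
  by (auto intro!: derivative_eq_intros assms simp: assms(3,4))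

section \<open>Projection coefficients of a perturbed global Maxwellian\<close>

lemma sqrt_mult_sqrt_mult: "a \<ge> 0 \<Longrightarrow> sqrt a * (sqrt a * x) = a * x"
  by (simp flip: mult.assoc)

lemma vcomp_eq_inner_Basis: obtains c :: "real^3" where "c \<in> Basis" and "\<And>v. vcomp j v = v \<bullet> c"
proof
  show "axis (if j = 1 then 1 else if j = 2 then 2 else 3) 1 \<in> (Basis :: (real^3) set)"
    by simp
  show "vcomp j v = v \<bullet> axis (if j = 1 then 1 else if j = 2 then 2 else 3) 1" for v :: "real^3"
    by (simp add: vcomp_def cart_eq_inner_axis)
qed

lemma sum_vcomp_inner: "(\<Sum>i=2..4. vcomp (i - 1) u * vcomp (i - 1) v) = u \<bullet> v"
  by (simp add: numeral_eq_Suc atLeastAtMostSuc_conv inner_vec_def sum_3 vcomp_def)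

lemma
  assumes m: "m > 0" and n0: "n0 > 0"
  shows ebasis_1_mult_sqrt_mu: "ebasis m n0 1 v * sqrt (mu m n0 v) = mu m n0 v / sqrt n0"
    and ebasis_velocity_mult_sqrt_mu: "i \<in> {2..4} \<Longrightarrow>
          ebasis m n0 i v * sqrt (mu m n0 v) = sqrt (m / n0) * vcomp (i - 1) v * mu m n0 v"
    and ebasis_5_mult_sqrt_mu:
          "ebasis m n0 5 v * sqrt (mu m n0 v) = (m * (norm v)\<^sup>2 - 3) / sqrt (6 * n0) * mu m n0 v"
proof -
  have sq: "sqrt (mu m n0 v) * sqrt (mu m n0 v) = mu m n0 v"
    using mu_pos[OF m n0, of v] by (simp add: abs_of_pos)
  show "ebasis m n0 1 v * sqrt (mu m n0 v) = mu m n0 v / sqrt n0"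
    using sq by (simp add: ebasis_def)
  show "ebasis m n0 i v * sqrt (mu m n0 v) = sqrt (m / n0) * vcomp (i - 1) v * mu m n0 v"
    if "i \<in> {2..4}" for i
  proof -
    have "i \<in> {2, 3, 4}" "i \<noteq> 1" "i \<noteq> 5"
      using that by auto
    then show ?thesis
      using sq by (simp add: ebasis_def mult.assoc)
  qed
  show "ebasis m n0 5 v * sqrt (mu m n0 v) = (m * (norm v)\<^sup>2 - 3) / sqrt (6 * n0) * mu m n0 v"
    using sq by (simp add: ebasis_def mult.assoc)
qed

lemma sum_atLeastAtMost_1_5:
  fixes h :: "nat \<Rightarrow> real"
  shows "(\<Sum>i=1..5. h i) = h 1 + (\<Sum>i=2..4. h i) + h 5"
  by (simp add: numeral_eq_Suc atLeastAtMostSuc_conv)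

locale perturbed_global_maxwellian =
  fixes m n0 :: real and f F :: "real^3 \<Rightarrow> real"
  assumes m_pos: "m > 0" and n0_pos: "n0 > 0"
    and F_eq: "F = (\<lambda>v. mu m n0 v + sqrt (mu m n0 v) * f v)"
    and integrable_weighted_F: "integrable lborel (\<lambda>v. (1 + (norm v)\<^sup>2) * F v)"
    and dens_nonzero: "dens F \<noteq> 0"
begin

lemma f_mult_sqrt_mu: "f v * sqrt (mu m n0 v) = F v - mu m n0 v"
  by (simp add: F_eq)

lemma F_measurable [measurable]: "F \<in> borel_measurable lborel"
proof -
  have "1 + (norm v)\<^sup>2 \<noteq> 0" for v :: "real^3"
    by (simp add: add_pos_nonneg less_imp_neq[symmetric])
  then have "F = (\<lambda>v. ((1 + (norm v)\<^sup>2) * F v) / (1 + (norm v)\<^sup>2))"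
    by (intro ext) simp
  also have "\<dots> \<in> borel_measurable lborel"
    using integrable_weighted_F by measurable
  finally show ?thesis .
qed

lemma integrable_weighted_bound:
  fixes g :: "real^3 \<Rightarrow> 'b::{banach, second_countable_topology}"
  assumes [measurable]: "g \<in> borel_measurable lborel"
    and "\<And>v. norm (g v) \<le> (1 + (norm v)\<^sup>2) * \<bar>F v\<bar>"
  shows "integrable lborel g"
  using integrable_weighted_F by (rule Bochner_Integration.integrable_bound) (simp_all add: assms abs_mult)

lemma integrable_F: "integrable lborel F"
  by (rule integrable_weighted_bound) (simp_all add: mult_le_cancel_right1)

lemma integrable_F_norm_sq: "integrable lborel (\<lambda>v. F v * (norm v)\<^sup>2)"
  by (rule integrable_weighted_bound) (simp_all add: abs_mult distrib_right)

lemma integrable_F_scaleR: "integrable lborel (\<lambda>v. F v *\<^sub>R v)"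
proof (rule integrable_weighted_bound)
  fix v :: "real^3"
  have "norm v \<le> 1 + (norm v)\<^sup>2"
    using zero_le_power2[of "norm v - 1"] zero_le_power2[of "norm v"] by (simp add: power2_diff, linarith)
  then have "norm v * \<bar>F v\<bar> \<le> (1 + (norm v)\<^sup>2) * \<bar>F v\<bar>"
    by (rule mult_right_mono) simp
  then show "norm (F v *\<^sub>R v) \<le> (1 + (norm v)\<^sup>2) * \<bar>F v\<bar>"
    by (simp add: mult.commute)
qed simp

lemma integrable_F_inner: "integrable lborel (\<lambda>v. F v * (v \<bullet> c))"
  using integrable_inner_left[OF integrable_F_scaleR, of c] by simp

lemma integral_F_inner: "(\<integral>v. F v * (v \<bullet> c) \<partial>lborel) = dens F * (vel F \<bullet> c)"
proof -
  have "(\<integral>v. F v * (v \<bullet> c) \<partial>lborel) = (\<integral>v. F v *\<^sub>R v \<partial>lborel) \<bullet> c"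
    using integral_inner_left[OF integrable_F_scaleR, of c] by simp
  then show ?thesis
    using dens_nonzero by (simp add: vel_def)
qed

lemma L2ip_ebasis_1: "L2ip f (ebasis m n0 1) = (dens F - n0) / sqrt n0"
proof -
  have "(\<lambda>v. f v * ebasis m n0 1 v) = (\<lambda>v. (F v - mu m n0 v) / sqrt n0)"
    by (simp add: ebasis_def f_mult_sqrt_mu[symmetric])
  then show ?thesis
    using integrable_F integrable_mu[OF m_pos]
    by (simp add: L2ip_def dens_def integral_mu[OF m_pos])
qed

lemma L2ip_ebasis_velocity:
  assumes "i \<in> {2..4}"
  shows "L2ip f (ebasis m n0 i) = sqrt (m / n0) * dens F * vcomp (i - 1) (vel F)"
proof -
  obtain c where c: "c \<in> Basis" and vcomp: "\<And>v. vcomp (i - 1) v = v \<bullet> c"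
    using vcomp_eq_inner_Basis[where j = "i - 1"] by blast
  have "i \<in> {2, 3, 4}" "i \<noteq> 1"
    using assms by auto
  then have "(\<lambda>v. f v * ebasis m n0 i v) = (\<lambda>v. sqrt (m / n0) * (F v * (v \<bullet> c) - mu m n0 v * (v \<bullet> c)))"
    by (intro ext) (unfold ebasis_def vcomp, simp add: F_eq algebra_simps)
  then show ?thesis
    unfolding vcomp using integrable_F_inner integrable_mu_coordinate[OF m_pos c]
    by (simp add: L2ip_def integral_F_inner integral_mu_coordinate[OF m_pos c])
qed

lemma temp_moment: "3 * dens F * temp m F = m * (\<integral>v. F v * (norm v)\<^sup>2 \<partial>lborel) - m * dens F * (norm (vel F))\<^sup>2"
proof -
  let ?U = "vel F"
  have "(\<lambda>v. F v * m * (norm (v - ?U))\<^sup>2)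
      = (\<lambda>v. m * (F v * (norm v)\<^sup>2) - 2 * m * (F v * (v \<bullet> ?U)) + m * (norm ?U)\<^sup>2 * F v)"
    by (intro ext) (simp add: power2_norm_eq_inner inner_diff algebra_simps inner_commute)
  moreover have "has_bochner_integral lborel
      (\<lambda>v. m * (F v * (norm v)\<^sup>2) - 2 * m * (F v * (v \<bullet> ?U)) + m * (norm ?U)\<^sup>2 * F v)
      (m * (\<integral>v. F v * (norm v)\<^sup>2 \<partial>lborel) - 2 * m * (dens F * (?U \<bullet> ?U)) + m * (norm ?U)\<^sup>2 * dens F)"
    using integrable_F_norm_sq integrable_F_inner integrable_F
    by (intro has_bochner_integral_add has_bochner_integral_diff has_bochner_integral_mult_right)
       (auto simp: has_bochner_integral_iff dens_def integral_F_inner)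
  ultimately have "(\<integral>v. F v * m * (norm (v - ?U))\<^sup>2 \<partial>lborel)
      = m * (\<integral>v. F v * (norm v)\<^sup>2 \<partial>lborel) - m * dens F * (norm ?U)\<^sup>2"
    by (simp add: has_bochner_integral_iff power2_norm_eq_inner)
  then show ?thesis
    using dens_nonzero by (simp add: temp_def)
qed

lemma L2ip_ebasis_5: "L2ip f (ebasis m n0 5) = Gk m (dens F) (vel F) (temp m F) / sqrt n0"
proof -
  have "(\<lambda>v. f v * ebasis m n0 5 v)
      = (\<lambda>v. (m * (F v * (norm v)\<^sup>2) - 3 * F v - m * (mu m n0 v * (norm v)\<^sup>2) + 3 * mu m n0 v) / sqrt (6 * n0))"
    by (intro ext) (simp add: ebasis_def F_eq algebra_simps add_divide_distrib diff_divide_distrib)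
  then have "L2ip f (ebasis m n0 5) = (m * (\<integral>v. F v * (norm v)\<^sup>2 \<partial>lborel) - 3 * dens F) / sqrt (6 * n0)"
    using integrable_F_norm_sq integrable_F integrable_mu_norm_sq[OF m_pos] integrable_mu[OF m_pos] m_pos
    by (simp add: L2ip_def dens_def integral_mu_norm_sq integral_mu)
  then show ?thesis
    using temp_moment n0_pos by (simp add: Gk_def real_sqrt_mult field_simps)
qed

end

context perturbed_global_maxwellian
begin

lemma Pproj_mult_sqrt_mu:
  "Pproj m n0 f v * sqrt (mu m n0 v) = mu m n0 v * ((dens F - n0) / n0
     + m * (dens F / n0) * (v \<bullet> vel F)
     + (m * (norm v)\<^sup>2 - 3) / 2 * (sqrt 6 * Gk m (dens F) (vel F) (temp m F) / (3 * n0)))"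
proof -
  let ?\<mu> = "mu m n0 v" and ?s = "sqrt (mu m n0 v)" and ?G = "Gk m (dens F) (vel F) (temp m F)"
  have "L2ip f (ebasis m n0 1) * ebasis m n0 1 v * ?s = (dens F - n0) / sqrt n0 * (?\<mu> / sqrt n0)"
    unfolding mult.assoc L2ip_ebasis_1 ebasis_1_mult_sqrt_mu[OF m_pos n0_pos] ..
  also have "\<dots> = ?\<mu> * ((dens F - n0) / n0)"
    using n0_pos by (simp add: field_simps)
  finally have density: "L2ip f (ebasis m n0 1) * ebasis m n0 1 v * ?s = ?\<mu> * ((dens F - n0) / n0)" .
  have "L2ip f (ebasis m n0 i) * ebasis m n0 i v * ?s
      = ?\<mu> * (m * (dens F / n0)) * (vcomp (i - 1) (vel F) * vcomp (i - 1) v)" if "i \<in> {2..4}" for i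
    unfolding mult.assoc[of _ "ebasis m n0 i v"] ebasis_velocity_mult_sqrt_mu[OF m_pos n0_pos that]
      L2ip_ebasis_velocity[OF that]
    using m_pos n0_pos by (simp add: real_sqrt_divide field_simps sqrt_mult_sqrt_mult)
  then have "(\<Sum>i=2..4. L2ip f (ebasis m n0 i) * ebasis m n0 i v) * ?s
      = (\<Sum>i=2..4. ?\<mu> * (m * (dens F / n0)) * (vcomp (i - 1) (vel F) * vcomp (i - 1) v))"
    unfolding sum_distrib_right by (rule sum.cong[OF refl])
  then have velocity: "(\<Sum>i=2..4. L2ip f (ebasis m n0 i) * ebasis m n0 i v) * ?s
      = ?\<mu> * (m * (dens F / n0) * (v \<bullet> vel F))"
    by (simp only: sum_distrib_left[symmetric] sum_vcomp_inner) (simp add: inner_commute)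
  have "L2ip f (ebasis m n0 5) * ebasis m n0 5 v * ?s
      = ?G / sqrt n0 * ((m * (norm v)\<^sup>2 - 3) / sqrt (6 * n0) * ?\<mu>)"
    unfolding mult.assoc L2ip_ebasis_5 ebasis_5_mult_sqrt_mu[OF m_pos n0_pos] ..
  also have "\<dots> = ?\<mu> * ((m * (norm v)\<^sup>2 - 3) / 2 * (sqrt 6 * ?G / (3 * n0)))"
    using n0_pos by (simp add: real_sqrt_mult field_simps sqrt_mult_sqrt_mult)
  finally have temperature: "L2ip f (ebasis m n0 5) * ebasis m n0 5 v * ?s
      = ?\<mu> * ((m * (norm v)\<^sup>2 - 3) / 2 * (sqrt 6 * ?G / (3 * n0)))" .
  show ?thesis
    unfolding Pproj_def sum_atLeastAtMost_1_5 distrib_right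
    using density velocity temperature by (simp add: algebra_simps)
qed

end

lemma velocity_exchange_mult_sqrt_mu:
  assumes A: "perturbed_global_maxwellian mA nA0 fA FA" and B: "perturbed_global_maxwellian mB nB0 fB FB"
  shows "(\<Sum>i=2..4. (sqrt (nA0 / nB0) * sqrt (mA / mB) * L2ip fB (ebasis mB nB0 i) - L2ip fA (ebasis mA nA0 i))
            * ebasis mA nA0 i v * sqrt (mu mA nA0 v))
    = mu mA nA0 v * mA * (v \<bullet> ((dens FB / nB0) *\<^sub>R vel FB - (dens FA / nA0) *\<^sub>R vel FA))"
proof -
  interpret A: perturbed_global_maxwellian mA nA0 fA FA by (rule A)
  interpret B: perturbed_global_maxwellian mB nB0 fB FB by (rule B)
  let ?\<mu> = "mu mA nA0 v"
  have "(sqrt (nA0 / nB0) * sqrt (mA / mB) * L2ip fB (ebasis mB nB0 i) - L2ip fA (ebasis mA nA0 i))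
      * ebasis mA nA0 i v * sqrt ?\<mu>
    = ?\<mu> * mA * (dens FB / nB0 * (vcomp (i - 1) (vel FB) * vcomp (i - 1) v)
        - dens FA / nA0 * (vcomp (i - 1) (vel FA) * vcomp (i - 1) v))" if "i \<in> {2..4}" for i
    unfolding mult.assoc[of _ "ebasis mA nA0 i v"] ebasis_velocity_mult_sqrt_mu[OF A.m_pos A.n0_pos that]
      A.L2ip_ebasis_velocity[OF that] B.L2ip_ebasis_velocity[OF that]
    using A.m_pos A.n0_pos B.m_pos B.n0_pos
    by (simp add: real_sqrt_divide field_simps sqrt_mult_sqrt_mult)
  then have "(\<Sum>i=2..4. (sqrt (nA0 / nB0) * sqrt (mA / mB) * L2ip fB (ebasis mB nB0 i) - L2ip fA (ebasis mA nA0 i))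
            * ebasis mA nA0 i v * sqrt ?\<mu>)
    = (\<Sum>i=2..4. ?\<mu> * mA * (dens FB / nB0 * (vcomp (i - 1) (vel FB) * vcomp (i - 1) v)
        - dens FA / nA0 * (vcomp (i - 1) (vel FA) * vcomp (i - 1) v)))"
    by (rule sum.cong[OF refl])
  also have "\<dots> = ?\<mu> * mA * (dens FB / nB0 * (vel FB \<bullet> v) - dens FA / nA0 * (vel FA \<bullet> v))"
    by (simp only: sum_distrib_left[symmetric] sum_subtractf sum_vcomp_inner)
  finally show ?thesis
    by (simp add: inner_diff_right inner_commute)
qed

lemma temperature_exchange_mult_sqrt_mu:
  assumes A: "perturbed_global_maxwellian mA nA0 fA FA" and B: "perturbed_global_maxwellian mB nB0 fB FB"
  shows "(sqrt (nA0 / nB0) * L2ip fB (ebasis mB nB0 5) - L2ip fA (ebasis mA nA0 5))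
            * ebasis mA nA0 5 v * sqrt (mu mA nA0 v)
    = mu mA nA0 v * ((mA * (norm v)\<^sup>2 - 3) / 2
        * (sqrt 6 * Gk mB (dens FB) (vel FB) (temp mB FB) / (3 * nB0)
           - sqrt 6 * Gk mA (dens FA) (vel FA) (temp mA FA) / (3 * nA0)))"
proof -
  interpret A: perturbed_global_maxwellian mA nA0 fA FA by (rule A)
  interpret B: perturbed_global_maxwellian mB nB0 fB FB by (rule B)
  show ?thesis
    unfolding mult.assoc[of _ "ebasis mA nA0 5 v"] ebasis_5_mult_sqrt_mu[OF A.m_pos A.n0_pos]
      A.L2ip_ebasis_5 B.L2ip_ebasis_5
    using A.n0_pos B.n0_pos by (simp add: real_sqrt_mult real_sqrt_divide field_simps sqrt_mult_sqrt_mult)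
qed

lemma mixture_maxwellian_linear_part:
  assumes A: "perturbed_global_maxwellian mA nA0 fA FA" and B: "perturbed_global_maxwellian mB nB0 fB FB"
  shows "mu mA nA0 v + Pproj mA nA0 fA v * sqrt (mu mA nA0 v)
      + c * (\<Sum>i=2..4. (sqrt (nA0 / nB0) * sqrt (mA / mB) * L2ip fB (ebasis mB nB0 i) - L2ip fA (ebasis mA nA0 i))
              * ebasis mA nA0 i v * sqrt (mu mA nA0 v))
      + w * (sqrt (nA0 / nB0) * L2ip fB (ebasis mB nB0 5) - L2ip fA (ebasis mA nA0 5))
          * ebasis mA nA0 5 v * sqrt (mu mA nA0 v)
    = mu mA nA0 v + mu mA nA0 v * ((dens FA - nA0) / nA0
        + mA * (v \<bullet> (((1 - c) * (dens FA / nA0)) *\<^sub>R vel FA + (c * (dens FB / nB0)) *\<^sub>R vel FB))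
        + (mA * (norm v)\<^sup>2 - 3) / 2
          * ((1 - w) * (sqrt 6 * Gk mA (dens FA) (vel FA) (temp mA FA) / (3 * nA0))
             + w * (sqrt 6 * Gk mB (dens FB) (vel FB) (temp mB FB) / (3 * nB0))))"
proof -
  interpret A: perturbed_global_maxwellian mA nA0 fA FA by (rule A)
  have temperature_assoc: "w * (sqrt (nA0 / nB0) * L2ip fB (ebasis mB nB0 5) - L2ip fA (ebasis mA nA0 5))
          * ebasis mA nA0 5 v * sqrt (mu mA nA0 v)
      = w * ((sqrt (nA0 / nB0) * L2ip fB (ebasis mB nB0 5) - L2ip fA (ebasis mA nA0 5))
          * ebasis mA nA0 5 v * sqrt (mu mA nA0 v))"
    by (simp only: mult.assoc)
  show ?thesis
    unfolding temperature_assoc A.Pproj_mult_sqrt_mu velocity_exchange_mult_sqrt_mu[OF A B]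
      temperature_exchange_mult_sqrt_mu[OF A B]
    using A.n0_pos by (simp add: inner_add_right inner_diff_right field_simps)
qed

section \<open>The mixture Maxwellian along the interpolation path\<close>

lemma maxw_at_reference: "m > 0 \<Longrightarrow> maxw m n0 0 1 v = mu m n0 v"
  by (simp add: maxw_def mu_def powr_divide field_simps)

lemma twice_differentiable_on_maxw_path:
  assumes m: "m > 0"
    and N: "twice_differentiable_on N S" and T: "twice_differentiable_on T S"
    and E: "twice_differentiable_on (\<lambda>\<theta>. (norm (v - U \<theta>))\<^sup>2) S"
    and T_pos: "\<And>\<theta>. \<theta> \<in> S \<Longrightarrow> T \<theta> > 0"
  shows "twice_differentiable_on (\<lambda>\<theta>. maxw m (N \<theta>) (U \<theta>) (T \<theta>) v) S"
proof -
  have "twice_differentiable_on (\<lambda>\<theta>. 2 * pi * T \<theta> / m) S"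
    using m by (intro twice_differentiable_on_divide twice_differentiable_on_mult
        twice_differentiable_on_const T) auto
  then have P: "twice_differentiable_on (\<lambda>\<theta>. (2 * pi * T \<theta> / m) powr (3 / 2)) S"
    using m T_pos by (intro twice_differentiable_on_compose[OF twice_differentiable_on_powr]) auto
  have "twice_differentiable_on (\<lambda>\<theta>. - (norm (v - U \<theta>))\<^sup>2 / (2 * T \<theta> / m)) S"
    using m T_pos by (intro twice_differentiable_on_divide twice_differentiable_on_minus
        twice_differentiable_on_mult twice_differentiable_on_const E T) force+
  then have X: "twice_differentiable_on (\<lambda>\<theta>. exp (- (norm (v - U \<theta>))\<^sup>2 / (2 * T \<theta> / m))) S"
    by (intro twice_differentiable_on_compose[OF twice_differentiable_on_exp]) auto
  show ?thesis
    unfolding maxw_def using m T_pos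
    by (intro twice_differentiable_on_mult twice_differentiable_on_divide N P X) force
qed

lemma maxw_path_has_real_derivative_at_0:
  assumes m: "m > 0" and n0: "n0 > 0"
    and N: "(N has_real_derivative N') (at 0)" and T: "(T has_real_derivative T') (at 0)"
    and E: "((\<lambda>\<theta>. (norm (v - U \<theta>))\<^sup>2) has_real_derivative E') (at 0)"
    and N0: "N 0 = n0" and T0: "T 0 = 1" and U0: "U 0 = 0"
  shows "((\<lambda>\<theta>. maxw m (N \<theta>) (U \<theta>) (T \<theta>) v) has_real_derivative
           mu m n0 v * (N' / n0 + (m * (norm v)\<^sup>2 - 3) / 2 * T' - m / 2 * E')) (at 0)"
proof -
  define c where "c = (2 * pi / m) powr (3 / 2)"
  have c_pos: "c > 0" using m by (simp add: c_def)
  have mu: "mu m n0 v = n0 / c * exp (- (norm v)\<^sup>2 / (2 / m))"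
    using m by (simp add: mu_def c_def powr_divide divide_simps)
  have P: "((\<lambda>\<theta>. (2 * pi * T \<theta> / m) powr (3 / 2)) has_real_derivative 3 / 2 * c * T') (at 0)"
  proof -
    have "c = (2 * pi / m) powr (1 / 2 + 1)"
      by (simp add: c_def)
    also have "\<dots> = (2 * pi / m) powr (1 / 2) * (2 * pi / m)"
      using m by (subst powr_add) simp
    finally show ?thesis
      using m by (auto intro!: derivative_eq_intros T simp: T0)
  qed
  define E where "E = (\<lambda>\<theta>. (norm (v - U \<theta>))\<^sup>2)"
  have E_deriv: "(E has_real_derivative E') (at 0)" and E0: "E 0 = (norm v)\<^sup>2"
    using E by (simp_all add: E_def U0)
  have X: "((\<lambda>\<theta>. exp (- E \<theta> / (2 * T \<theta> / m))) has_real_derivative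
      exp (- (norm v)\<^sup>2 / (2 / m)) * (m / 2 * ((norm v)\<^sup>2 * T' - E'))) (at 0)"
    using m by (auto intro!: derivative_eq_intros T E_deriv simp: T0 E0 field_simps)
  have P0: "(2 * pi * T 0 / m) powr (3 / 2) = c"
    by (simp add: T0 c_def)
  have X0: "exp (- (norm (v - U 0))\<^sup>2 / (2 * T 0 / m)) = exp (- (norm v)\<^sup>2 / (2 / m))"
    by (simp add: T0 U0)
  show ?thesis
    unfolding maxw_def
    by (rule DERIV_cong[OF DERIV_mult[OF DERIV_divide[OF N P] X[unfolded E_def]]])
       (use c_pos n0 in \<open>simp_all only: P0 X0 N0, simp_all add: mu field_simps\<close>)
qed

lemma nth_pos: "n > 0 \<Longrightarrow> n0 > 0 \<Longrightarrow> \<theta> \<in> {0..1} \<Longrightarrow> nth \<theta> n n0 > 0"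
  unfolding nth_def by (cases "\<theta> = 0") (auto intro: add_pos_nonneg)

lemma nth_0: "nth 0 n n0 = n0"
  by (simp add: nth_def)

lemma nth_1: "nth 1 n n0 = n"
  by (simp add: nth_def)

lemma nth_has_real_derivative: "((\<lambda>\<theta>. nth \<theta> n n0) has_real_derivative n - n0) (at x)"
  unfolding nth_def by (auto intro!: derivative_eq_intros)

lemma twice_differentiable_on_nth: "twice_differentiable_on (\<lambda>\<theta>. nth \<theta> n n0) S"
  unfolding nth_def
  by (intro twice_differentiable_on_add twice_differentiable_on_mult twice_differentiable_on_diff
      twice_differentiable_on_const twice_differentiable_on_ident)

definition Uth_factor :: "real \<Rightarrow> real \<Rightarrow> real \<Rightarrow> real" where
  "Uth_factor \<theta> n n0 = \<theta> * n / nth \<theta> n n0"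

lemma Uth_eq_Uth_factor: "Uth \<theta> n n0 U = Uth_factor \<theta> n n0 *\<^sub>R U"
  by (simp add: Uth_def Uth_factor_def)

lemma Uth_factor_0: "Uth_factor 0 n n0 = 0"
  by (simp add: Uth_factor_def)

lemma twice_differentiable_on_Uth_factor:
  "twice_differentiable_on (\<lambda>\<theta>. Uth_factor \<theta> n n0) {\<theta>. nth \<theta> n n0 \<noteq> 0}"
  unfolding Uth_factor_def
  by (intro twice_differentiable_on_divide twice_differentiable_on_mult twice_differentiable_on_ident
      twice_differentiable_on_const twice_differentiable_on_nth) auto

lemma Uth_factor_has_real_derivative:
  "n0 \<noteq> 0 \<Longrightarrow> ((\<lambda>\<theta>. Uth_factor \<theta> n n0) has_real_derivative n / n0) (at 0)"
  unfolding Uth_factor_def by (auto intro!: derivative_eq_intros nth_has_real_derivative simp: nth_def)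

lemma Tth_eq_Uth_factor:
  "Tth m \<theta> n n0 U T = (sqrt 6 * \<theta> * Gk m n U T + 3 * nth \<theta> n n0
     - m * nth \<theta> n n0 * (Uth_factor \<theta> n n0)\<^sup>2 * (norm U)\<^sup>2) / (3 * nth \<theta> n n0)"
  by (simp add: Tth_def Uth_eq_Uth_factor power_mult_distrib)

lemma twice_differentiable_on_Tth:
  "twice_differentiable_on (\<lambda>\<theta>. Tth m \<theta> n n0 U T) {\<theta>. nth \<theta> n n0 \<noteq> 0}"
  unfolding Tth_eq_Uth_factor
  by (intro twice_differentiable_on_divide twice_differentiable_on_mult twice_differentiable_on_add
      twice_differentiable_on_diff twice_differentiable_on_power twice_differentiable_on_const
      twice_differentiable_on_ident twice_differentiable_on_nth twice_differentiable_on_Uth_factor) auto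

lemma Tth_has_real_derivative:
  "n0 \<noteq> 0 \<Longrightarrow> ((\<lambda>\<theta>. Tth m \<theta> n n0 U T) has_real_derivative sqrt 6 * Gk m n U T / (3 * n0)) (at 0)"
  unfolding Tth_eq_Uth_factor
  by (auto intro!: derivative_eq_intros nth_has_real_derivative Uth_factor_has_real_derivative
      simp: nth_def Uth_factor_0 field_simps power2_eq_square)

lemma Uth_0: "Uth 0 n n0 U = 0"
  by (simp add: Uth_eq_Uth_factor Uth_factor_0)

lemma Uth_1: "n \<noteq> 0 \<Longrightarrow> Uth 1 n n0 U = U"
  by (simp add: Uth_def nth_def)

lemma Tth_0: "n0 \<noteq> 0 \<Longrightarrow> Tth m 0 n n0 U T = 1"
  by (simp add: Tth_def Uth_def nth_def)

lemma Tth_1: "n \<noteq> 0 \<Longrightarrow> Tth m 1 n n0 U T = T"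
  by (simp add: Tth_def Gk_def Uth_def nth_def field_simps)

text \<open>The parameter \<open>\<theta>\<close> interpolates the moments of both species
  between the global equilibrium (\<open>\<theta> = 0\<close>) and the local state (\<open>\<theta> = 1\<close>), as in
  \<open>\<M>\<^sub>1\<^sub>2(\<theta>)\<close>; \<open>c\<close> and \<open>w\<close> are the weights of B in the mixture velocity and temperature.\<close>

locale mixture_maxwellian_path =
  fixes mA nA nA0 TA mB nB nB0 TB c w g :: real and UA UB :: "real^3"
  assumes mA_pos: "mA > 0" and nA_pos: "nA > 0" and nA0_pos: "nA0 > 0"
    and nB_pos: "nB > 0" and nB0_pos: "nB0 > 0"
begin

definition vel_path :: "real \<Rightarrow> real^3" where
  "vel_path \<theta> = (1 - c) *\<^sub>R Uth \<theta> nA nA0 UA + c *\<^sub>R Uth \<theta> nB nB0 UB"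

definition temp_path :: "real \<Rightarrow> real" where
  "temp_path \<theta> = (1 - w) * Tth mA \<theta> nA nA0 UA TA + w * Tth mB \<theta> nB nB0 UB TB
     + g * (norm (Uth \<theta> nB nB0 UB - Uth \<theta> nA nA0 UA))\<^sup>2"

definition domain :: "real set" where
  "domain = {\<theta>. nth \<theta> nA nA0 \<noteq> 0} \<inter> {\<theta>. nth \<theta> nB nB0 \<noteq> 0}"

lemma velocity_offset_eq:
  "v - vel_path \<theta> = v + (- (1 - c) * Uth_factor \<theta> nA nA0) *\<^sub>R UA + (- c * Uth_factor \<theta> nB nB0) *\<^sub>R UB"
  by (simp add: vel_path_def Uth_eq_Uth_factor algebra_simps)

lemma temp_path_eq:
  "temp_path \<theta> = (1 - w) * Tth mA \<theta> nA nA0 UA TA + w * Tth mB \<theta> nB nB0 UB TB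
     + g * (norm (0 + (- Uth_factor \<theta> nA nA0) *\<^sub>R UA + Uth_factor \<theta> nB nB0 *\<^sub>R UB))\<^sup>2"
  by (simp add: temp_path_def Uth_eq_Uth_factor algebra_simps)

lemma twice_differentiable_on_Uth_factors:
  "twice_differentiable_on (\<lambda>\<theta>. Uth_factor \<theta> nA nA0) domain"
  "twice_differentiable_on (\<lambda>\<theta>. Uth_factor \<theta> nB nB0) domain"
  unfolding domain_def by (auto intro: twice_differentiable_on_subset[OF twice_differentiable_on_Uth_factor])

lemma Uth_factors_have_real_derivative:
  "((\<lambda>\<theta>. Uth_factor \<theta> nA nA0) has_real_derivative nA / nA0) (at 0)"
  "((\<lambda>\<theta>. Uth_factor \<theta> nB nB0) has_real_derivative nB / nB0) (at 0)"
  using nA0_pos nB0_pos by (simp_all add: Uth_factor_has_real_derivative)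

lemma twice_differentiable_on_temp_path: "twice_differentiable_on temp_path domain"
  unfolding temp_path_eq[abs_def]
  using twice_differentiable_on_Uth_factors
  by (intro twice_differentiable_on_add twice_differentiable_on_mult twice_differentiable_on_const
      twice_differentiable_on_norm_sq_path twice_differentiable_on_minus
      twice_differentiable_on_subset[OF twice_differentiable_on_Tth]) (auto simp: domain_def)

lemma twice_differentiable_on_velocity_offset:
  "twice_differentiable_on (\<lambda>\<theta>. (norm (v - vel_path \<theta>))\<^sup>2) domain"
  unfolding velocity_offset_eq
  by (intro twice_differentiable_on_norm_sq_path twice_differentiable_on_mult
      twice_differentiable_on_const twice_differentiable_on_Uth_factors)

lemma temp_path_has_real_derivative:
  "(temp_path has_real_derivative (1 - w) * (sqrt 6 * Gk mA nA UA TA / (3 * nA0))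
     + w * (sqrt 6 * Gk mB nB UB TB / (3 * nB0))) (at 0)"
proof -
  have "(temp_path has_real_derivative (1 - w) * (sqrt 6 * Gk mA nA UA TA / (3 * nA0))
     + w * (sqrt 6 * Gk mB nB UB TB / (3 * nB0))
     + g * (2 * ((- (nA / nA0)) * (0 \<bullet> UA) + nB / nB0 * (0 \<bullet> UB)))) (at 0)"
    unfolding temp_path_eq[abs_def] using nA0_pos nB0_pos
    by (intro DERIV_add DERIV_cmult DERIV_minus Tth_has_real_derivative
        norm_sq_path_has_real_derivative_at_0 Uth_factors_have_real_derivative)
       (auto simp: Uth_factor_0)
  then show ?thesis
    by simp
qed

lemma velocity_offset_has_real_derivative:
  "((\<lambda>\<theta>. (norm (v - vel_path \<theta>))\<^sup>2) has_real_derivative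
     - 2 * (v \<bullet> (((1 - c) * (nA / nA0)) *\<^sub>R UA + (c * (nB / nB0)) *\<^sub>R UB))) (at 0)"
proof -
  have "((\<lambda>\<theta>. (norm (v - vel_path \<theta>))\<^sup>2) has_real_derivative
     2 * ((- (1 - c) * (nA / nA0)) * (v \<bullet> UA) + (- c * (nB / nB0)) * (v \<bullet> UB))) (at 0)"
    unfolding velocity_offset_eq
    by (intro norm_sq_path_has_real_derivative_at_0 DERIV_cmult Uth_factors_have_real_derivative)
       (simp_all add: Uth_factor_0)
  then show ?thesis
    by (simp add: inner_add_right algebra_simps)
qed

lemma vel_path_0: "vel_path 0 = 0"
  by (simp add: vel_path_def Uth_0)

lemma temp_path_0: "temp_path 0 = 1"
  using nA0_pos nB0_pos by (simp add: temp_path_def Tth_0 Uth_0)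

lemma taylor_expansion:
  assumes temp_pos: "\<forall>\<theta>\<in>{0..1}. temp_path \<theta> > 0"
  shows "maxw mA nA ((1 - c) *\<^sub>R UA + c *\<^sub>R UB) ((1 - w) * TA + w * TB + g * (norm (UB - UA))\<^sup>2) v
    = mu mA nA0 v
      + mu mA nA0 v * ((nA - nA0) / nA0 + mA * (v \<bullet> (((1 - c) * (nA / nA0)) *\<^sub>R UA + (c * (nB / nB0)) *\<^sub>R UB))
          + (mA * (norm v)\<^sup>2 - 3) / 2
            * ((1 - w) * (sqrt 6 * Gk mA nA UA TA / (3 * nA0)) + w * (sqrt 6 * Gk mB nB UB TB / (3 * nB0))))
      + integral {0..1} (\<lambda>\<theta>. deriv (deriv (\<lambda>s. maxw mA (nth s nA nA0) (vel_path s) (temp_path s) v)) \<theta>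
          * (1 - \<theta>))"
    (is "_ = _ + ?first_order + integral _ (\<lambda>\<theta>. deriv (deriv ?M) \<theta> * _)")
proof -
  define S where "S = domain \<inter> temp_path -` {0<..}"
  have "continuous_on domain temp_path"
    by (rule twice_differentiable_on_imp_continuous_on[OF twice_differentiable_on_temp_path])
  then have "open S"
    unfolding S_def domain_def nth_def
    by (intro continuous_open_preimage open_Int open_Collect_neq continuous_intros) auto
  moreover have "{0..1} \<subseteq> S"
    using temp_pos nth_pos[OF nA_pos nA0_pos] nth_pos[OF nB_pos nB0_pos] by (force simp: S_def domain_def)
  moreover have "twice_differentiable_on ?M S"
    unfolding S_def using mA_pos
    by (intro twice_differentiable_on_maxw_path twice_differentiable_on_nth
        twice_differentiable_on_subset[OF twice_differentiable_on_temp_path]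
        twice_differentiable_on_subset[OF twice_differentiable_on_velocity_offset]) auto
  ultimately have "?M 1 = ?M 0 + deriv ?M 0 + integral {0..1} (\<lambda>\<theta>. deriv (deriv ?M) \<theta> * (1 - \<theta>))"
    by (rule taylor_integral_remainder_two)
  moreover have "?M 1 = maxw mA nA ((1 - c) *\<^sub>R UA + c *\<^sub>R UB) ((1 - w) * TA + w * TB + g * (norm (UB - UA))\<^sup>2) v"
    using nA_pos nB_pos by (simp add: vel_path_def temp_path_def Tth_1 Uth_1 nth_1)
  moreover have "?M 0 = mu mA nA0 v"
    using mA_pos by (simp add: vel_path_0 temp_path_0 nth_0 maxw_at_reference)
  moreover have "(?M has_real_derivative ?first_order) (at 0)"
    by (rule DERIV_cong[OF maxw_path_has_real_derivative_at_0[OF mA_pos nA0_pos nth_has_real_derivative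
          temp_path_has_real_derivative velocity_offset_has_real_derivative]])
       (use nA0_pos in \<open>simp_all add: nth_0 temp_path_0 vel_path_0 inner_add_right field_simps\<close>)
  ultimately show ?thesis
    by (simp add: DERIV_imp_deriv)
qed

end

lemma mixture_maxwellian_expansion:
  assumes A: "perturbed_global_maxwellian mA nA0 fA FA" and B: "perturbed_global_maxwellian mB nB0 fB FB"
    and dens_pos: "dens FA > 0" "dens FB > 0"
    and temp_pos: "\<forall>\<theta>\<in>{0..1}. (1 - w) * Tth mA \<theta> (dens FA) nA0 (vel FA) (temp mA FA)
        + w * Tth mB \<theta> (dens FB) nB0 (vel FB) (temp mB FB)
        + g * (norm (Uth \<theta> (dens FB) nB0 (vel FB) - Uth \<theta> (dens FA) nA0 (vel FA)))\<^sup>2 > 0"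
  shows "maxw mA (dens FA) ((1 - c) *\<^sub>R vel FA + c *\<^sub>R vel FB)
        ((1 - w) * temp mA FA + w * temp mB FB + g * (norm (vel FB - vel FA))\<^sup>2) v
    = mu mA nA0 v + Pproj mA nA0 fA v * sqrt (mu mA nA0 v)
      + c * (\<Sum>i=2..4. (sqrt (nA0 / nB0) * sqrt (mA / mB) * L2ip fB (ebasis mB nB0 i) - L2ip fA (ebasis mA nA0 i))
              * ebasis mA nA0 i v * sqrt (mu mA nA0 v))
      + w * (sqrt (nA0 / nB0) * L2ip fB (ebasis mB nB0 5) - L2ip fA (ebasis mA nA0 5))
          * ebasis mA nA0 5 v * sqrt (mu mA nA0 v)
      + sqrt (mu mA nA0 v) * (1 / sqrt (mu mA nA0 v) * integral {0..1} (\<lambda>\<theta>. deriv (deriv (\<lambda>s.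
          maxw mA (nth s (dens FA) nA0) ((1 - c) *\<^sub>R Uth s (dens FA) nA0 (vel FA) + c *\<^sub>R Uth s (dens FB) nB0 (vel FB))
            ((1 - w) * Tth mA s (dens FA) nA0 (vel FA) (temp mA FA) + w * Tth mB s (dens FB) nB0 (vel FB) (temp mB FB)
             + g * (norm (Uth s (dens FB) nB0 (vel FB) - Uth s (dens FA) nA0 (vel FA)))\<^sup>2) v)) \<theta> * (1 - \<theta>)))"
proof -
  interpret A: perturbed_global_maxwellian mA nA0 fA FA by (rule A)
  interpret B: perturbed_global_maxwellian mB nB0 fB FB by (rule B)
  interpret path: mixture_maxwellian_path mA "dens FA" nA0 "temp mA FA" mB "dens FB" nB0 "temp mB FB" c w g
      "vel FA" "vel FB"
    using A.m_pos A.n0_pos B.n0_pos dens_pos by unfold_locales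
  have "sqrt (mu mA nA0 v) * (1 / sqrt (mu mA nA0 v) * I) = I" for I
    using mu_pos[OF A.m_pos A.n0_pos, of v] by simp
  then show ?thesis
    unfolding mixture_maxwellian_linear_part[OF A B]
    using path.taylor_expansion[unfolded path.vel_path_def path.temp_path_def] temp_pos by simp
qed

theorem proposition2p3:
  fixes m1 m2 n10 n20 \<delta> \<omega> \<gamma> :: real
    and f1 f2 F1 F2 :: "real^3 \<Rightarrow> real"
  assumes m: "m1 \<ge> m2" "m2 > 0"
    and n0: "n10 > 0" "n20 > 0"
    and \<delta>: "0 \<le> \<delta>" "\<delta> < 1"
    and \<omega>: "0 \<le> \<omega>" "\<omega> < 1"
    and \<gamma>: "\<gamma> \<ge> 0"
    and F1: "F1 = (\<lambda>v. mu m1 n10 v + sqrt (mu m1 n10 v) * f1 v)"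
    and F2: "F2 = (\<lambda>v. mu m2 n20 v + sqrt (mu m2 n20 v) * f2 v)"
    and int1: "integrable lborel (\<lambda>v. (1 + (norm v)^2) * F1 v)"
    and int2: "integrable lborel (\<lambda>v. (1 + (norm v)^2) * F2 v)"
    and npos: "dens F1 > 0" "dens F2 > 0"
    and Tpos: "\<forall>\<theta>\<in>{0..1}.
        T12th m1 m2 \<omega> \<gamma> (dens F1) n10 (vel F1) (temp m1 F1) (dens F2) n20 (vel F2) (temp m2 F2) \<theta> > 0
      \<and> T21th m1 m2 \<delta> \<omega> \<gamma> (dens F1) n10 (vel F1) (temp m1 F1) (dens F2) n20 (vel F2) (temp m2 F2) \<theta> > 0"
  shows "\<forall>v.
      maxw m1 (dens F1) (U12 \<delta> (vel F1) (vel F2)) (T12 \<omega> \<gamma> (temp m1 F1) (temp m2 F2) (vel F1) (vel F2)) v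
      = mu m1 n10 v + Pproj m1 n10 f1 v * sqrt (mu m1 n10 v)
        + (1 - \<delta>) * (\<Sum>i=2..4. (sqrt (n10 / n20) * sqrt (m1 / m2) * L2ip f2 (ebasis m2 n20 i)
                                   - L2ip f1 (ebasis m1 n10 i)) * ebasis m1 n10 i v * sqrt (mu m1 n10 v))
        + (1 - \<omega>) * (sqrt (n10 / n20) * L2ip f2 (ebasis m2 n20 5) - L2ip f1 (ebasis m1 n10 5))
            * ebasis m1 n10 5 v * sqrt (mu m1 n10 v)
        + sqrt (mu m1 n10 v) * (1 / sqrt (mu m1 n10 v) * integral {0..1} (\<lambda>\<theta>.
            deriv (deriv (\<lambda>s. M12th m1 m2 \<delta> \<omega> \<gamma> (dens F1) n10 (vel F1) (temp m1 F1)
                                       (dens F2) n20 (vel F2) (temp m2 F2) s v)) \<theta> * (1 - \<theta>)))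
    \<and> maxw m2 (dens F2) (U21 m1 m2 \<delta> (vel F1) (vel F2))
          (T21 m1 m2 \<delta> \<omega> \<gamma> (temp m1 F1) (temp m2 F2) (vel F1) (vel F2)) v
      = mu m2 n20 v + Pproj m2 n20 f2 v * sqrt (mu m2 n20 v)
        + m1 / m2 * (1 - \<delta>) * (\<Sum>i=2..4. (sqrt (n20 / n10) * sqrt (m2 / m1) * L2ip f1 (ebasis m1 n10 i)
                                   - L2ip f2 (ebasis m2 n20 i)) * ebasis m2 n20 i v * sqrt (mu m2 n20 v))
        + (1 - \<omega>) * (sqrt (n20 / n10) * L2ip f1 (ebasis m1 n10 5) - L2ip f2 (ebasis m2 n20 5))
            * ebasis m2 n20 5 v * sqrt (mu m2 n20 v)
        + sqrt (mu m2 n20 v) * (1 / sqrt (mu m2 n20 v) * integral {0..1} (\<lambda>\<theta>.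
            deriv (deriv (\<lambda>s. M21th m1 m2 \<delta> \<omega> \<gamma> (dens F1) n10 (vel F1) (temp m1 F1)
                                       (dens F2) n20 (vel F2) (temp m2 F2) s v)) \<theta> * (1 - \<theta>)))"
proof -
  have m_pos: "m1 > 0" "m2 > 0"
    using m by auto
  have A: "perturbed_global_maxwellian m1 n10 f1 F1" and B: "perturbed_global_maxwellian m2 n20 f2 F2"
    using m_pos n0 F1 F2 int1 int2 npos by (simp_all add: perturbed_global_maxwellian_def)
  define K where "K = 1/3 * m1 * (1 - \<delta>) * (m1 / m2 * (\<delta> - 1) + 1 + \<delta>) - \<gamma>"
  \<comment> \<open>Bring both species into the shape \<open>(1 - c, c)\<close>, \<open>(1 - w, w)\<close> of the mixture lemma.\<close>
  have U21_eq: "U21 m1 m2 \<delta> X Y = (1 - m1 / m2 * (1 - \<delta>)) *\<^sub>R Y + (m1 / m2 * (1 - \<delta>)) *\<^sub>R X" for X Y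
    by (simp add: U21_def add.commute)
  have T21_eq: "T21 m1 m2 \<delta> \<omega> \<gamma> T1 T2 X Y = (1 - (1 - \<omega>)) * T2 + (1 - \<omega>) * T1 + K * (norm (X - Y))\<^sup>2"
    for T1 T2 X Y
    by (simp add: T21_def K_def norm_minus_commute)
  have U12_eq: "U12 \<delta> X Y = (1 - (1 - \<delta>)) *\<^sub>R X + (1 - \<delta>) *\<^sub>R Y" for X Y
    by (simp add: U12_def)
  have T12_eq: "T12 \<omega> \<gamma> T1 T2 X Y = (1 - (1 - \<omega>)) * T1 + (1 - \<omega>) * T2 + \<gamma> * (norm (Y - X))\<^sup>2" for T1 T2 X Y
    by (simp add: T12_def)
  note T_pos = Tpos[unfolded T12th_def T21th_def T12_eq T21_eq ball_conj_distrib]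
  show ?thesis
    unfolding M12th_def M21th_def T12th_def T21th_def U12_eq T12_eq U21_eq T21_eq
    by (intro allI conjI mixture_maxwellian_expansion[OF A B npos conjunct1[OF T_pos]]
        mixture_maxwellian_expansion[OF B A npos(2,1) conjunct2[OF T_pos]])
qed

end
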